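(* Let $\Theta=\{\sigma_1,\dots,\sigma_q\}$ be a regular set of pairwise commuting Pauli operators on $k$ (memory) qubits, $\sigma_j=\nu_j\sigma_{X,j}\sigma_{Z,j}$, with characteristic numbers $\eta_j$. Add ancilla qubits $(0,j)$ and $(1,j)$, $j=1,\dots,q$, with Pauli operators $X_{\alpha,j},Y_{\alpha,j},Z_{\alpha,j}$. For any memory state $|\psi\rangle$ let $|\Psi_i\rangle=|\psi\rangle\otimes\bigotimes_j|+\rangle_{0,j}\otimes\bigotimes_j|y+\rangle_{1,j}$ (with $X|+\rangle=|+\rangle$, $Y|y+\rangle=|y+\rangle$). For outcomes $\mu_{X,j},\mu_{Z,j},\mu_{0,j},\mu_{1,j}\in\{\pm1\}$ define $$|\Psi_f\rangle=\Big(\prod_j\sigma_{Z,j}^{c_j}\Big)\Big(\prod_j\tfrac{1+\mu_{1,j}Y_{1,j}}2\Big)\Big(\prod_j\tfrac{1+\mu_{0,j}X_{0,j}}2\Big)\Big(\prod_j\tfrac{1+\mu_{Z,j}\sigma_{Z,j}Z_{0,j}^{1-\eta_j}X_{1,j}^{\eta_j}}2\Big)\Big(\prod_j\tfrac{1+\mu_{X,j}\sigma_{X,j}Z_{0,j}^{1-\eta_j}Z_{1,j}^{\eta_j}}2\Big)|\Psi_i\rangle,$$ where $c_j=1$ if ($\eta_j=0$ and $\mu_{0,j}=-1$) or ($\eta_j=1$ and $\mu_{1,j}=-1$), and $c_j=0$ otherwise. Then $$|\Psi_f\rangle=\Big(\prod_{j=1}^q\tfrac{1+(-i)^{\eta_j}\nu_j\mu_{X,j}\mu_{Z,j}\sigma_j}{2}\Big)|\psi\rangle\otimes|\phi\rangle$$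 for some ancilla state $|\phi\rangle$ whose norm $\langle\phi|\phi\rangle$ does not depend on the outcomes $\mu_{X,j},\mu_{Z,j}$. (That is, the protocol realises the simultaneous measurement of $\Theta$ with outcome $(-i)^{\eta_j}\nu_j\mu_{X,j}\mu_{Z,j}$ for $\sigma_j$.)
   Context: Every Pauli operator $\sigma$ (with phase) on a set of qubits can be written uniquely as $\sigma=\nu\sigma_X\sigma_Z$ with $\nu\in\{\pm1,\pm i\}$, $\sigma_X$ a tensor product of Pauli $X$ and identity factors, and $\sigma_Z$ a tensor product of Pauli $Z$ and identity factors; here the operators $\sigma_j$ are Hermitian. The characteristic number $\eta_j$ of $\sigma_j$ is $0$ if $\sigma_{X,j}$ and $\sigma_{Z,j}$ commute and $1$ if they anticommute (so $\nu_j=\pm1$ when $\eta_j=0$ and $\nu_j=\pm i$ when $\eta_j=1$). A set $\{\sigma_1,\dots,\sigma_q\}$ is regular if $\sigma_{X,i}$ commutes with $\sigma_{Z,j}$ for all $i\neq j$. Memory operators act on the memory factor only; ancilla operators act on the indicated ancilla qubit only. *)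

theory Defs
  imports Complex_Main
begin

text \<open>Qubits are indexed by finite types: memory qubits by 'm, and the ancilla
qubit (alpha, j) by the pair (alpha, j) :: bool \<times> 'q (False = 0, True = 1).
A computational basis configuration of the whole system is a pair
(memory bit assignment, ancilla bit assignment); bit False is |0>, True is |1>.\<close>

type_synonym 'm mstate = "('m \<Rightarrow> bool) \<Rightarrow> complex"
type_synonym 'q astate = "(bool \<times> 'q \<Rightarrow> bool) \<Rightarrow> complex"
type_synonym ('m,'q) qstate = "('m \<Rightarrow> bool) \<times> (bool \<times> 'q \<Rightarrow> bool) \<Rightarrow> complex"

definition flipset :: "'a set \<Rightarrow> ('a \<Rightarrow> bool) \<Rightarrow> ('a \<Rightarrow> bool)" where
  "flipset A x = (\<lambda>i. if i \<in> A then \<not> x i else x i)"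

text \<open>Memory operators: sigma_X = tensor of X on the qubits in A, sigma_Z = tensor of Z on B.\<close>
definition mX :: "'m set \<Rightarrow> 'm mstate \<Rightarrow> 'm mstate" where
  "mX A \<psi> = (\<lambda>x. \<psi> (flipset A x))"

definition mZ :: "'m set \<Rightarrow> 'm mstate \<Rightarrow> 'm mstate" where
  "mZ B \<psi> = (\<lambda>x. (-1) ^ card {i \<in> B. x i} * \<psi> x)"

definition mpauli :: "complex \<Rightarrow> 'm set \<Rightarrow> 'm set \<Rightarrow> 'm mstate \<Rightarrow> 'm mstate" where
  "mpauli \<nu> A B \<psi> = (\<lambda>x. \<nu> * mX A (mZ B \<psi>) x)"

definition char_num :: "'m set \<Rightarrow> 'm set \<Rightarrow> nat" where
  "char_num A B = (if mX A \<circ> mZ B = mZ B \<circ> mX A then 0 else 1)"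

definition regular :: "('q \<Rightarrow> 'm set) \<Rightarrow> ('q \<Rightarrow> 'm set) \<Rightarrow> bool" where
  "regular a b \<longleftrightarrow> (\<forall>i j. i \<noteq> j \<longrightarrow> mX (a i) \<circ> mZ (b j) = mZ (b j) \<circ> mX (a i))"

definition liftM :: "('m mstate \<Rightarrow> 'm mstate) \<Rightarrow> ('m,'q) qstate \<Rightarrow> ('m,'q) qstate" where
  "liftM Op \<Psi> = (\<lambda>(x, s). Op (\<lambda>x'. \<Psi> (x', s)) x)"

definition aX :: "bool \<times> 'q \<Rightarrow> ('m,'q) qstate \<Rightarrow> ('m,'q) qstate" where
  "aX v \<Psi> = (\<lambda>(x, s). \<Psi> (x, s(v := \<not> s v)))"

definition aZ :: "bool \<times> 'q \<Rightarrow> ('m,'q) qstate \<Rightarrow> ('m,'q) qstate" where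
  "aZ v \<Psi> = (\<lambda>(x, s). (if s v then -1 else 1) * \<Psi> (x, s))"

definition aY :: "bool \<times> 'q \<Rightarrow> ('m,'q) qstate \<Rightarrow> ('m,'q) qstate" where
  "aY v \<Psi> = (\<lambda>(x, s). (if s v then \<i> else - \<i>) * \<Psi> (x, s(v := \<not> s v)))"

definition proj :: "complex \<Rightarrow> (('c \<Rightarrow> complex) \<Rightarrow> ('c \<Rightarrow> complex))
                    \<Rightarrow> ('c \<Rightarrow> complex) \<Rightarrow> ('c \<Rightarrow> complex)" where
  "proj \<theta> Op \<Psi> = (\<lambda>c. (\<Psi> c + \<theta> * Op \<Psi> c) / 2)"

text \<open>Product (composition) of operators F j over all j (in the enumeration order;
in the statement all factors of each product commute).\<close>
definition oprod :: "('q::enum \<Rightarrow> ('c \<Rightarrow> 'c)) \<Rightarrow> 'c \<Rightarrow> 'c" where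
  "oprod F = foldr (\<lambda>j A. F j \<circ> A) Enum.enum id"

definition tens :: "'m mstate \<Rightarrow> 'q astate \<Rightarrow> ('m,'q) qstate" where
  "tens \<psi> \<phi> = (\<lambda>(x, s). \<psi> x * \<phi> s)"

text \<open>Initial ancilla state: |+> on every (0,j), |y+> = (|0> + i|1>)/sqrt 2 on every (1,j).\<close>
definition anc_init :: "'q::finite astate" where
  "anc_init s = (\<Prod>j\<in>UNIV. complex_of_real (1 / sqrt 2)
                      * ((if s (True, j) then \<i> else 1) / complex_of_real (sqrt 2)))"

definition anorm :: "'q::finite astate \<Rightarrow> real" where
  "anorm \<phi> = (\<Sum>s\<in>UNIV. (cmod (\<phi> s))\<^sup>2)"

definition corr :: "nat \<Rightarrow> complex \<Rightarrow> complex \<Rightarrow> nat" where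
  "corr \<eta> m0 m1 = (if (\<eta> = 0 \<and> m0 = -1) \<or> (\<eta> = 1 \<and> m1 = -1) then 1 else 0)"

definition Psi_f :: "('q::enum \<Rightarrow> 'm::finite set) \<Rightarrow> ('q \<Rightarrow> 'm set)
     \<Rightarrow> ('q \<Rightarrow> complex) \<Rightarrow> ('q \<Rightarrow> complex) \<Rightarrow> ('q \<Rightarrow> complex) \<Rightarrow> ('q \<Rightarrow> complex)
     \<Rightarrow> 'm mstate \<Rightarrow> ('m,'q) qstate" where
  "Psi_f a b \<mu>X \<mu>Z \<mu>0 \<mu>1 \<psi> =
    (let \<eta> = (\<lambda>j. char_num (a j) (b j)) in
     oprod (\<lambda>j. liftM (mZ (b j) ^^ corr (\<eta> j) (\<mu>0 j) (\<mu>1 j)))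
      (oprod (\<lambda>j. proj (\<mu>1 j) (aY (True, j)))
       (oprod (\<lambda>j. proj (\<mu>0 j) (aX (False, j)))
        (oprod (\<lambda>j. proj (\<mu>Z j) (liftM (mZ (b j)) \<circ> (aZ (False, j) ^^ (1 - \<eta> j))
                                                  \<circ> (aX (True, j) ^^ \<eta> j)))
         (oprod (\<lambda>j. proj (\<mu>X j) (liftM (mX (a j)) \<circ> (aZ (False, j) ^^ (1 - \<eta> j))
                                                   \<circ> (aZ (True, j) ^^ \<eta> j)))
          (tens \<psi> anc_init))))))"

end

theory Submission
  imports Defs
begin

text \<open>Operators belonging to different indices j act on disjoint ancilla pairs and, by
regularity, on commuting parts of the memory, so the five layers of the protocol regroup
into one gadget per index. On a product state g \<otimes> |+\<rangle>|y+\<rangle> \<otimes> R, where R does not involve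
the pair ((0,j),(1,j)), gadget j acts on g as the projector
(1 + (-i)^\<eta>_j \<nu>_j \<mu>_X \<mu>_Z \<sigma>_j)/2 and replaces |+\<rangle>|y+\<rangle> by an explicit two-qubit state
\<phi>_j in which \<mu>_Z enters only as a sign and \<mu>_X not at all. Applying the gadgets one index
at a time yields the product of projectors applied to \<psi>, tensored with the product of
the \<phi>_j.\<close>

definition commute :: "('c \<Rightarrow> 'c) \<Rightarrow> ('c \<Rightarrow> 'c) \<Rightarrow> bool" where
  "commute F G \<longleftrightarrow> F \<circ> G = G \<circ> F"

definition linear_op :: "(('c \<Rightarrow> complex) \<Rightarrow> ('c \<Rightarrow> complex)) \<Rightarrow> bool" where
  "linear_op L \<longleftrightarrow>
     (\<forall>\<alpha> \<beta> \<Psi> \<Phi>. L (\<lambda>c. \<alpha> * \<Psi> c + \<beta> * \<Phi> c) = (\<lambda>c. \<alpha> * L \<Psi> c + \<beta> * L \<Phi> c))"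

lemma linear_opD:
  "linear_op L \<Longrightarrow> L (\<lambda>c. \<alpha> * \<Psi> c + \<beta> * \<Phi> c) = (\<lambda>c. \<alpha> * L \<Psi> c + \<beta> * L \<Phi> c)"
  by (simp add: linear_op_def)

lemma linear_op_scale: "linear_op L \<Longrightarrow> L (\<lambda>c. \<alpha> * \<Psi> c) x = \<alpha> * L \<Psi> x"
  using linear_opD[of L \<alpha> \<Psi> 0 \<Psi>] by simp

lemma proj_eq_lincomb: "proj \<theta> Op \<Psi> = (\<lambda>c. (1/2) * \<Psi> c + (\<theta>/2) * Op \<Psi> c)"
  by (rule ext) (simp add: proj_def field_simps)

lemma linear_op_proj: "linear_op Op \<Longrightarrow> linear_op (proj \<theta> Op)"
  unfolding linear_op_def proj_eq_lincomb by (auto simp: algebra_simps)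

lemma linear_op_comp: "linear_op F \<Longrightarrow> linear_op G \<Longrightarrow> linear_op (F \<circ> G)"
  unfolding linear_op_def by simp

lemma linear_op_id: "linear_op id"
  unfolding linear_op_def by simp

lemma linear_op_funpow: "linear_op F \<Longrightarrow> linear_op (F ^^ n)"
  by (induction n) (auto intro: linear_op_id linear_op_comp)

lemma linear_op_mX: "linear_op (mX A)"
  unfolding linear_op_def mX_def by simp

lemma linear_op_mZ: "linear_op (mZ B)"
  unfolding linear_op_def mZ_def by (auto simp: algebra_simps)

lemma linear_op_aX: "linear_op (aX v)"
  unfolding linear_op_def aX_def by auto

lemma linear_op_aZ: "linear_op (aZ v)"
  unfolding linear_op_def aZ_def by (auto simp: algebra_simps)

lemma linear_op_aY: "linear_op (aY v)"
  unfolding linear_op_def aY_def by (auto simp: algebra_simps)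

lemma linear_op_liftM: "linear_op Op \<Longrightarrow> linear_op (liftM Op)"
  unfolding linear_op_def liftM_def by (auto simp: fun_eq_iff split: prod.splits)

lemma commute_sym: "commute A B \<Longrightarrow> commute B A"
  unfolding commute_def by simp

lemma commute_comp_right: "commute A B \<Longrightarrow> commute A C \<Longrightarrow> commute A (B \<circ> C)"
  unfolding commute_def fun_eq_iff by simp

lemma commute_comp_left: "commute A C \<Longrightarrow> commute B C \<Longrightarrow> commute (A \<circ> B) C"
  unfolding commute_def fun_eq_iff by simp

lemma commute_funpow_right: "commute A B \<Longrightarrow> commute A (B ^^ n)"
  by (induction n) (simp_all add: commute_comp_right, simp add: commute_def)

lemma commute_funpow_left: "commute B A \<Longrightarrow> commute (B ^^ n) A"
  by (metis commute_sym commute_funpow_right)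

lemma commute_proj_right:
  assumes "linear_op A" and "commute A Op"
  shows "commute A (proj \<theta> Op)"
proof -
  have "A (Op \<Psi>) = Op (A \<Psi>)" for \<Psi>
    using assms(2) by (metis commute_def comp_apply)
  then show ?thesis
    unfolding commute_def fun_eq_iff comp_apply proj_eq_lincomb
    by (simp only: linear_opD[OF assms(1)] simp_thms)
qed

lemma commute_proj_left: "linear_op A \<Longrightarrow> commute Op A \<Longrightarrow> commute (proj \<theta> Op) A"
  by (metis commute_sym commute_proj_right)

lemma commute_pointwise: "(\<And>\<Psi> x s. F (G \<Psi>) (x, s) = G (F \<Psi>) (x, s)) \<Longrightarrow> commute F G"
  unfolding commute_def fun_eq_iff by auto

lemma foldr_commute:
  "\<forall>j\<in>set xs. commute (F j) H \<Longrightarrow> commute (foldr (\<lambda>j A. F j \<circ> A) xs id) H"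
  by (induction xs) (simp_all add: commute_comp_left, simp add: commute_def)

lemma foldr_comp_merge:
  assumes "distinct xs" and "\<forall>i j. i \<noteq> j \<longrightarrow> commute (F i) (G j)"
  shows "foldr (\<lambda>j A. F j \<circ> A) xs id \<circ> foldr (\<lambda>j A. G j \<circ> A) xs id
       = foldr (\<lambda>j A. (F j \<circ> G j) \<circ> A) xs id"
  using assms
proof (induction xs)
  case Nil
  then show ?case by simp
next
  case (Cons i xs)
  let ?RF = "foldr (\<lambda>j A. F j \<circ> A) xs id" and ?RG = "foldr (\<lambda>j A. G j \<circ> A) xs id"
  have "commute ?RF (G i)"
    using Cons.prems by (intro foldr_commute ballI) (metis distinct.simps(2))
  then have "F i \<circ> ?RF \<circ> (G i \<circ> ?RG) = (F i \<circ> G i) \<circ> (?RF \<circ> ?RG)"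
    by (simp add: commute_def comp_assoc) (metis comp_assoc)
  also have "?RF \<circ> ?RG = foldr (\<lambda>j A. (F j \<circ> G j) \<circ> A) xs id"
    using Cons.prems by (intro Cons.IH) auto
  finally show ?case
    unfolding foldr_Cons comp_apply .
qed

lemma oprod_merge:
  assumes "\<forall>i j. i \<noteq> j \<longrightarrow> commute (F i) (G j)"
  shows "oprod F (oprod G \<Psi>) = oprod (\<lambda>j. F j \<circ> G j) \<Psi>"
  using fun_cong[OF foldr_comp_merge[OF enum_distinct assms], of \<Psi>]
  unfolding oprod_def comp_apply .

lemma liftM_comp: "liftM A \<circ> liftM B = liftM (A \<circ> B)"
  unfolding liftM_def by (auto simp: fun_eq_iff split: prod.splits)

lemma commute_liftM: "commute A B \<Longrightarrow> commute (liftM A) (liftM B)"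
  unfolding commute_def by (simp add: liftM_comp)

lemma commute_liftM_aX: "commute (liftM A) (aX v)" "commute (aX v) (liftM A)"
  unfolding commute_def by (auto simp: fun_eq_iff liftM_def aX_def)

lemma commute_liftM_aZ:
  assumes "linear_op A"
  shows "commute (liftM A) (aZ v)" "commute (aZ v) (liftM A)"
  by (auto intro!: commute_pointwise simp: liftM_def aZ_def linear_op_scale[OF assms])

lemma commute_liftM_aY:
  assumes "linear_op A"
  shows "commute (liftM A) (aY v)" "commute (aY v) (liftM A)"
  by (auto intro!: commute_pointwise simp: liftM_def aY_def linear_op_scale[OF assms])

lemma commute_aZ_aZ: "commute (aZ v) (aZ w)"
  unfolding commute_def by (auto simp: fun_eq_iff aZ_def)

lemma commute_aX_aX: "commute (aX v) (aX w)"
  unfolding commute_def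
  by (cases "v = w") (auto simp: fun_eq_iff aX_def fun_upd_twist)

lemma commute_aZ_aX: "v \<noteq> w \<Longrightarrow> commute (aZ v) (aX w)" "v \<noteq> w \<Longrightarrow> commute (aX w) (aZ v)"
  unfolding commute_def by (auto simp: fun_eq_iff aX_def aZ_def)

lemma commute_aY_aX: "v \<noteq> w \<Longrightarrow> commute (aY v) (aX w)" "v \<noteq> w \<Longrightarrow> commute (aX w) (aY v)"
  unfolding commute_def by (auto simp: fun_eq_iff aX_def aY_def fun_upd_twist)

lemma commute_aY_aZ: "v \<noteq> w \<Longrightarrow> commute (aY v) (aZ w)" "v \<noteq> w \<Longrightarrow> commute (aZ w) (aY v)"
  unfolding commute_def by (auto simp: fun_eq_iff aZ_def aY_def)

lemma commute_mZ_mZ: "commute (mZ A) (mZ B)"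
  unfolding commute_def by (auto simp: fun_eq_iff mZ_def)

lemmas commute_intros = linear_op_proj linear_op_comp linear_op_funpow
  linear_op_mX linear_op_mZ linear_op_aX linear_op_aZ linear_op_aY linear_op_liftM
  commute_comp_right commute_comp_left commute_funpow_right commute_funpow_left
  commute_proj_right commute_proj_left commute_liftM commute_liftM_aX commute_liftM_aZ
  commute_liftM_aY commute_aZ_aZ commute_aX_aX commute_aZ_aX commute_aY_aX commute_aY_aZ
  commute_mZ_mZ

definition zsign :: "'m set \<Rightarrow> ('m \<Rightarrow> bool) \<Rightarrow> complex" where
  "zsign B x = (-1) ^ card {i \<in> B. x i}"

lemma mX_apply: "mX A f x = f (flipset A x)"
  by (simp add: mX_def)

lemma mZ_apply: "mZ B f x = zsign B x * f x"
  by (simp add: mZ_def zsign_def)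

lemma proj_apply: "proj \<theta> Op \<Psi> c = (\<Psi> c + \<theta> * Op \<Psi> c) / 2"
  by (simp add: proj_def)

lemma aX_apply: "aX v \<Psi> (x, s) = \<Psi> (x, s(v := \<not> s v))"
  by (simp add: aX_def)

lemma aZ_apply: "aZ v \<Psi> (x, s) = (if s v then -1 else 1) * \<Psi> (x, s)"
  by (simp add: aZ_def)

lemma aY_apply: "aY v \<Psi> (x, s) = (if s v then \<i> else - \<i>) * \<Psi> (x, s(v := \<not> s v))"
  by (simp add: aY_def)

lemma liftM_apply: "liftM Op \<Psi> (x, s) = Op (\<lambda>x'. \<Psi> (x', s)) x"
  by (simp add: liftM_def)

lemma zsign_cases: "zsign B x = 1 \<or> zsign B x = -1"
  unfolding zsign_def by (cases "even (card {i \<in> B. x i})") auto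

lemma neg_one_power_sums: "(-1::complex) ^ (p + r) = (-1) ^ (q + r) * (-1) ^ (p + q)"
  by (simp add: power_add minus_one_power_iff)

lemma zsign_flipset:
  fixes x :: "'m::finite \<Rightarrow> bool"
  shows "zsign B (flipset A x) = (-1) ^ card (A \<inter> B) * zsign B x"
proof -
  let ?P = "{i \<in> B - A. x i}" and ?Q = "{i \<in> B \<inter> A. x i}" and ?R = "{i \<in> B \<inter> A. \<not> x i}"
  have flipped: "card {i \<in> B. flipset A x i} = card ?P + card ?R"
    by (subst card_Un_disjoint[symmetric]) (auto simp: flipset_def intro!: arg_cong[where f=card])
  have unflipped: "card {i \<in> B. x i} = card ?P + card ?Q"
    by (subst card_Un_disjoint[symmetric]) (auto intro!: arg_cong[where f=card])
  have overlap: "card (A \<inter> B) = card ?Q + card ?R"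
    by (subst card_Un_disjoint[symmetric]) (auto intro!: arg_cong[where f=card])
  have "zsign B (flipset A x) = (-1) ^ (card ?P + card ?R)"
    by (simp only: zsign_def flipped)
  also have "\<dots> = (-1) ^ (card ?Q + card ?R) * (-1) ^ (card ?P + card ?Q)"
    by (rule neg_one_power_sums)
  also have "\<dots> = (-1) ^ card (A \<inter> B) * zsign B x"
    by (simp only: zsign_def unflipped overlap)
  finally show ?thesis .
qed

lemma char_num_parity:
  fixes A B :: "'m::finite set"
  shows "char_num A B = (if even (card (A \<inter> B)) then 0 else 1)"
proof (cases "even (card (A \<inter> B))")
  case True
  then have "mX A \<circ> mZ B = mZ B \<circ> mX A"
    by (auto simp: fun_eq_iff mX_apply mZ_apply zsign_flipset)
  with True show ?thesis by (simp add: char_num_def)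
next
  case False
  fix x :: "'m \<Rightarrow> bool"
  have "mX A (mZ B (\<lambda>_. 1)) x \<noteq> mZ B (mX A (\<lambda>_. 1)) x"
    using False zsign_cases[of B x] by (auto simp: mX_apply mZ_apply zsign_flipset)
  then have "mX A \<circ> mZ B \<noteq> mZ B \<circ> mX A"
    by (metis comp_apply)
  with False show ?thesis by (simp add: char_num_def)
qed

subsection \<open>The gadget of a single index\<close>

definition gadget :: "'m set \<Rightarrow> 'm set \<Rightarrow> complex \<Rightarrow> complex \<Rightarrow> complex \<Rightarrow> complex
                      \<Rightarrow> 'q \<Rightarrow> ('m,'q) qstate \<Rightarrow> ('m,'q) qstate" where
  "gadget A B mx mz m0 m1 j =
     (let \<eta> = char_num A B in
      liftM (mZ B ^^ corr \<eta> m0 m1) \<circ> proj m1 (aY (True, j)) \<circ> proj m0 (aX (False, j))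
      \<circ> proj mz (liftM (mZ B) \<circ> (aZ (False, j) ^^ (1 - \<eta>)) \<circ> (aX (True, j) ^^ \<eta>))
      \<circ> proj mx (liftM (mX A) \<circ> (aZ (False, j) ^^ (1 - \<eta>)) \<circ> (aZ (True, j) ^^ \<eta>)))"

lemma psi_f_eq_gadgets:
  fixes a b :: "'q::enum \<Rightarrow> 'm::finite set"
  assumes reg: "regular a b"
  shows "Psi_f a b \<mu>X \<mu>Z \<mu>0 \<mu>1 \<psi>
       = oprod (\<lambda>j. gadget (a j) (b j) (\<mu>X j) (\<mu>Z j) (\<mu>0 j) (\<mu>1 j) j) (tens \<psi> anc_init)"
proof -
  have XZ: "commute (mX (a i)) (mZ (b j))" and ZX: "commute (mZ (b i)) (mX (a j))"
    if "i \<noteq> j" for i j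
    using reg that unfolding regular_def commute_def by metis+
  define \<eta> where "\<eta> = (\<lambda>j. char_num (a j) (b j))"
  define S1 where "S1 = (\<lambda>j. proj (\<mu>X j) (liftM (mX (a j)) \<circ> (aZ (False, j) ^^ (1 - \<eta> j))
                                                     \<circ> (aZ (True, j) ^^ \<eta> j)))"
  define S2 where "S2 = (\<lambda>j. proj (\<mu>Z j) (liftM (mZ (b j)) \<circ> (aZ (False, j) ^^ (1 - \<eta> j))
                                                     \<circ> (aX (True, j) ^^ \<eta> j)))"
  define S3 :: "'q \<Rightarrow> ('m,'q) qstate \<Rightarrow> ('m,'q) qstate"
    where "S3 = (\<lambda>j. proj (\<mu>0 j) (aX (False, j)))"
  define S4 :: "'q \<Rightarrow> ('m,'q) qstate \<Rightarrow> ('m,'q) qstate"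
    where "S4 = (\<lambda>j. proj (\<mu>1 j) (aY (True, j)))"
  define S5 :: "'q \<Rightarrow> ('m,'q) qstate \<Rightarrow> ('m,'q) qstate"
    where "S5 = (\<lambda>j. liftM (mZ (b j) ^^ corr (\<eta> j) (\<mu>0 j) (\<mu>1 j)))"
  note defs = S1_def S2_def S3_def S4_def S5_def
  have "\<forall>i j. i \<noteq> j \<longrightarrow> commute (S2 i) (S1 j)"
    and "\<forall>i j. i \<noteq> j \<longrightarrow> commute (S3 i) (S2 j \<circ> S1 j)"
    and "\<forall>i j. i \<noteq> j \<longrightarrow> commute (S4 i) (S3 j \<circ> (S2 j \<circ> S1 j))"
    and "\<forall>i j. i \<noteq> j \<longrightarrow> commute (S5 i) (S4 j \<circ> (S3 j \<circ> (S2 j \<circ> S1 j)))"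
    unfolding defs by (intro allI impI commute_intros XZ ZX; simp)+
  note merge = oprod_merge[OF this(1)] oprod_merge[OF this(2)] oprod_merge[OF this(3)]
    oprod_merge[OF this(4)]
  have "Psi_f a b \<mu>X \<mu>Z \<mu>0 \<mu>1 \<psi>
      = oprod S5 (oprod S4 (oprod S3 (oprod S2 (oprod S1 (tens \<psi> anc_init)))))"
    unfolding Psi_f_def Let_def defs \<eta>_def by (rule refl)
  also have "\<dots> = oprod (\<lambda>j. S5 j \<circ> (S4 j \<circ> (S3 j \<circ> (S2 j \<circ> S1 j)))) (tens \<psi> anc_init)"
    by (simp only: merge)
  also have "\<dots> = oprod (\<lambda>j. gadget (a j) (b j) (\<mu>X j) (\<mu>Z j) (\<mu>0 j) (\<mu>1 j) j) (tens \<psi> anc_init)"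
    unfolding gadget_def Let_def defs \<eta>_def comp_assoc by (rule refl)
  finally show ?thesis .
qed

text \<open>Amplitudes of the ancilla pair ((0,j),(1,j)) as functions of its two qubit values:
pair_init is |+\<rangle>|y+\<rangle>, and pair_final \<eta>_j \<mu>_Z \<mu>_0 \<mu>_1 is the state \<phi>_j left behind by
gadget j.\<close>

definition pair_init :: "bool \<Rightarrow> bool \<Rightarrow> complex" where
  "pair_init b c = (if c then \<i> else 1) / 2"

definition pair_final :: "nat \<Rightarrow> complex \<Rightarrow> complex \<Rightarrow> complex \<Rightarrow> bool \<Rightarrow> bool \<Rightarrow> complex" where
  "pair_final \<eta> mz m0 m1 b c =
     (if \<eta> = 0
      then (if m0 = 1 then 1 else mz) * (if b then m0 else 1) * (if c then \<i> else 1) / 4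
           * (if m1 = 1 then 1 else 0)
      else (if m0 = 1 then 1 else 0) * (if m1 = 1 then 1 else \<i> * mz) * (if c then \<i> * m1 else 1) / 4)"

lemma anc_init_eq_pair_init: "anc_init s = (\<Prod>j\<in>UNIV. pair_init (s (False, j)) (s (True, j)))"
proof -
  have "complex_of_real (1 / sqrt 2) * (z / complex_of_real (sqrt 2)) = z / 2" for z
    by (simp add: field_simps flip: of_real_mult)
  then show ?thesis
    by (simp only: anc_init_def pair_init_def)
qed

lemma cmod_pair_final_sign_invariant:
  "mz \<in> {1, -1} \<Longrightarrow> mz' \<in> {1, -1} \<Longrightarrow>
   cmod (pair_final \<eta> mz m0 m1 b c) = cmod (pair_final \<eta> mz' m0 m1 b c)"
  unfolding pair_final_def by (auto simp: norm_mult norm_divide)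

definition indep_of_pair :: "'q \<Rightarrow> 'q astate \<Rightarrow> bool" where
  "indep_of_pair j R \<longleftrightarrow> (\<forall>s b v. R (s((b, j) := v)) = R s)"

lemma gadget_product_state:
  fixes A B :: "'m::finite set" and R :: "'q astate"
  assumes indep: "indep_of_pair j R"
    and \<nu>: "(char_num A B = 0 \<longrightarrow> \<nu> \<in> {1, -1}) \<and> (char_num A B = 1 \<longrightarrow> \<nu> \<in> {\<i>, -\<i>})"
    and m: "mx \<in> {1, -1}" "mz \<in> {1, -1}" "m0 \<in> {1, -1}" "m1 \<in> {1, -1}"
  shows "gadget A B mx mz m0 m1 j (\<lambda>(x, s). g x * pair_init (s (False, j)) (s (True, j)) * R s)
       = (\<lambda>(x, s). proj ((- \<i>) ^ char_num A B * \<nu> * mx * mz) (mpauli \<nu> A B) g x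
                   * pair_final (char_num A B) mz m0 m1 (s (False, j)) (s (True, j)) * R s)"
proof (rule ext, clarify)
  fix x s
  have RF: "R (s((False, j) := v)) = R s" and RT: "R (s((True, j) := v)) = R s" for s v
    using indep by (simp_all add: indep_of_pair_def)
  have zf: "zsign B (flipset A x) = (if char_num A B = 0 then 1 else -1) * zsign B x"
    by (simp add: zsign_flipset char_num_parity)
  have \<eta>: "char_num A B = 0 \<or> char_num A B = 1"
    by (simp add: char_num_parity)
  show "gadget A B mx mz m0 m1 j (\<lambda>(x, s). g x * pair_init (s (False, j)) (s (True, j)) * R s) (x, s)
      = proj ((- \<i>) ^ char_num A B * \<nu> * mx * mz) (mpauli \<nu> A B) g x
          * pair_final (char_num A B) mz m0 m1 (s (False, j)) (s (True, j)) * R s"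
    using \<eta> zsign_cases[of B x] \<nu> m
    apply (simp only: insert_iff singleton_iff empty_iff simp_thms)
    apply (elim disjE conjE)
    apply (simp_all add: gadget_def proj_apply aX_apply aZ_apply aY_apply liftM_apply
        mX_apply mZ_apply pair_init_def pair_final_def RF RT zf corr_def mpauli_def)
    apply (cases "s (False, j)"; cases "s (True, j)"; auto simp: field_simps)+
    done
qed

subsection \<open>Iterating over the indices\<close>

lemma foldr_local_ops_product_state:
  fixes G :: "'q::finite \<Rightarrow> ('m,'q) qstate \<Rightarrow> ('m,'q) qstate"
    and P :: "'q \<Rightarrow> 'm mstate \<Rightarrow> 'm mstate" and f f' :: "'q \<Rightarrow> bool \<Rightarrow> bool \<Rightarrow> complex"
  assumes local: "\<And>j g R. indep_of_pair j R \<Longrightarrow>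
      G j (\<lambda>(x, s). g x * f j (s (False, j)) (s (True, j)) * R s)
      = (\<lambda>(x, s). P j g x * f' j (s (False, j)) (s (True, j)) * R s)"
    and "distinct xs"
  shows "foldr (\<lambda>j A. G j \<circ> A) xs id (\<lambda>(x, s). g x * (\<Prod>k\<in>UNIV. f k (s (False, k)) (s (True, k))))
       = (\<lambda>(x, s). foldr (\<lambda>j A. P j \<circ> A) xs id g x
           * (\<Prod>k\<in>UNIV. (if k \<in> set xs then f' k else f k) (s (False, k)) (s (True, k))))"
  using \<open>distinct xs\<close>
proof (induction xs)
  case Nil
  show ?case by simp
next
  case (Cons j xs)
  let ?amp = "\<lambda>xs s k. (if k \<in> set xs then f' k else f k) (s (False, k)) (s (True, k))"
  define R where "R s = (\<Prod>k\<in>UNIV - {j}. ?amp xs s k)" for s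
  have split_off_j: "(\<Prod>k\<in>UNIV. ?amp ys s k) = ?amp ys s j * R s"
    if "\<forall>k\<in>UNIV - {j}. ?amp ys s k = ?amp xs s k" for ys s
  proof -
    have "(\<Prod>k\<in>UNIV. ?amp ys s k) = ?amp ys s j * (\<Prod>k\<in>UNIV - {j}. ?amp ys s k)"
      by (rule prod.remove) simp_all
    also have "(\<Prod>k\<in>UNIV - {j}. ?amp ys s k) = R s"
      unfolding R_def using that by (intro prod.cong) auto
    finally show ?thesis .
  qed
  have "indep_of_pair j R"
    unfolding indep_of_pair_def R_def by (intro allI prod.cong) auto
  then have step: "G j (\<lambda>(x, s). g' x * f j (s (False, j)) (s (True, j)) * R s)
      = (\<lambda>(x, s). P j g' x * f' j (s (False, j)) (s (True, j)) * R s)" for g'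
    by (intro local)
  from Cons.prems have "j \<notin> set xs" by simp
  define gxs where "gxs = foldr (\<lambda>j A. P j \<circ> A) xs id g"
  have "foldr (\<lambda>j A. G j \<circ> A) xs id (\<lambda>(x, s). g x * (\<Prod>k\<in>UNIV. f k (s (False, k)) (s (True, k))))
      = (\<lambda>(x, s). gxs x * (\<Prod>k\<in>UNIV. ?amp xs s k))"
    unfolding gxs_def using Cons.prems by (intro Cons.IH) simp
  also have "\<dots> = (\<lambda>(x, s). gxs x * f j (s (False, j)) (s (True, j)) * R s)"
    using \<open>j \<notin> set xs\<close> split_off_j[of xs] by (simp add: fun_eq_iff mult.assoc)
  finally have "foldr (\<lambda>j A. G j \<circ> A) (j # xs) id
               (\<lambda>(x, s). g x * (\<Prod>k\<in>UNIV. f k (s (False, k)) (s (True, k))))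
      = (\<lambda>(x, s). P j gxs x * f' j (s (False, j)) (s (True, j)) * R s)"
    by (simp add: step)
  also have "\<dots> = (\<lambda>(x, s). foldr (\<lambda>j A. P j \<circ> A) (j # xs) id g x * (\<Prod>k\<in>UNIV. ?amp (j # xs) s k))"
    using split_off_j[of "j # xs"] by (simp add: gxs_def fun_eq_iff mult.assoc)
  finally show ?case .
qed

definition anc_final :: "('q::finite \<Rightarrow> 'm set) \<Rightarrow> ('q \<Rightarrow> 'm set)
                         \<Rightarrow> ('q \<Rightarrow> complex) \<Rightarrow> ('q \<Rightarrow> complex) \<Rightarrow> ('q \<Rightarrow> complex) \<Rightarrow> 'q astate" where
  "anc_final a b \<mu>Z \<mu>0 \<mu>1 s =
     (\<Prod>k\<in>UNIV. pair_final (char_num (a k) (b k)) (\<mu>Z k) (\<mu>0 k) (\<mu>1 k) (s (False, k)) (s (True, k)))"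

lemma psi_f_eq_tens_anc_final:
  fixes \<nu> :: "'q::enum \<Rightarrow> complex" and a b :: "'q \<Rightarrow> 'm::finite set"
  assumes herm: "\<forall>j. (char_num (a j) (b j) = 0 \<longrightarrow> \<nu> j \<in> {1, -1})
                    \<and> (char_num (a j) (b j) = 1 \<longrightarrow> \<nu> j \<in> {\<i>, -\<i>})"
    and reg: "regular a b"
    and outcomes: "\<forall>j. \<mu>X j \<in> {1, -1} \<and> \<mu>Z j \<in> {1, -1} \<and> \<mu>0 j \<in> {1, -1} \<and> \<mu>1 j \<in> {1, -1}"
  shows "Psi_f a b \<mu>X \<mu>Z \<mu>0 \<mu>1 \<psi> =
           tens (oprod (\<lambda>j. proj ((- \<i>) ^ char_num (a j) (b j) * \<nu> j * \<mu>X j * \<mu>Z j)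
                                  (mpauli (\<nu> j) (a j) (b j))) \<psi>)
                (anc_final a b \<mu>Z \<mu>0 \<mu>1)"
proof -
  let ?G = "\<lambda>j. gadget (a j) (b j) (\<mu>X j) (\<mu>Z j) (\<mu>0 j) (\<mu>1 j) j"
  let ?P = "\<lambda>j. proj ((- \<i>) ^ char_num (a j) (b j) * \<nu> j * \<mu>X j * \<mu>Z j) (mpauli (\<nu> j) (a j) (b j))"
  let ?\<phi> = "\<lambda>j. pair_final (char_num (a j) (b j)) (\<mu>Z j) (\<mu>0 j) (\<mu>1 j)"
  have "?G j (\<lambda>(x, s). g x * pair_init (s (False, j)) (s (True, j)) * R s)
      = (\<lambda>(x, s). ?P j g x * ?\<phi> j (s (False, j)) (s (True, j)) * R s)"
    if "indep_of_pair j R" for j g R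
    by (rule gadget_product_state[OF that]) (use herm outcomes in blast)+
  from foldr_local_ops_product_state[where G = ?G and P = ?P and f = "\<lambda>_. pair_init"
      and f' = ?\<phi>, OF this enum_distinct]
  show ?thesis
    by (simp add: psi_f_eq_gadgets[OF reg] oprod_def tens_def anc_init_eq_pair_init anc_final_def
        flip: UNIV_enum)
qed

lemma anorm_anc_final_sign_invariant:
  assumes "\<forall>j. \<mu>Z j \<in> {1, -1} \<and> \<mu>Z' j \<in> {1, -1}"
  shows "anorm (anc_final a b \<mu>Z \<mu>0 \<mu>1) = anorm (anc_final a b \<mu>Z' \<mu>0 \<mu>1)"
proof -
  have "cmod (anc_final a b \<mu>Z \<mu>0 \<mu>1 s) = cmod (anc_final a b \<mu>Z' \<mu>0 \<mu>1 s)" for s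
    unfolding anc_final_def prod_norm[symmetric] using assms
    by (intro prod.cong refl cmod_pair_final_sign_invariant) auto
  then show ?thesis
    by (simp add: anorm_def)
qed

theorem lemma8:
  fixes \<nu> :: "'q::enum \<Rightarrow> complex"
    and a b :: "'q \<Rightarrow> 'm::finite set"
    and \<psi> :: "'m mstate"
    and \<mu>0 \<mu>1 :: "'q \<Rightarrow> complex"
  assumes herm: "\<forall>j. (char_num (a j) (b j) = 0 \<longrightarrow> \<nu> j \<in> {1, -1})
                    \<and> (char_num (a j) (b j) = 1 \<longrightarrow> \<nu> j \<in> {\<i>, -\<i>})"
    and reg: "regular a b"
    and comm: "\<forall>i j. mpauli (\<nu> i) (a i) (b i) \<circ> mpauli (\<nu> j) (a j) (b j)
                    = mpauli (\<nu> j) (a j) (b j) \<circ> mpauli (\<nu> i) (a i) (b i)"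
    and out0: "\<forall>j. \<mu>0 j \<in> {1, -1}"
    and out1: "\<forall>j. \<mu>1 j \<in> {1, -1}"
  shows "\<exists>\<Phi> :: ('q \<Rightarrow> complex) \<Rightarrow> ('q \<Rightarrow> complex) \<Rightarrow> 'q astate.
           (\<forall>\<mu>X \<mu>Z. (\<forall>j. \<mu>X j \<in> {1, -1} \<and> \<mu>Z j \<in> {1, -1}) \<longrightarrow>
              Psi_f a b \<mu>X \<mu>Z \<mu>0 \<mu>1 \<psi> =
              tens (oprod (\<lambda>j. proj ((- \<i>) ^ char_num (a j) (b j) * \<nu> j * \<mu>X j * \<mu>Z j)
                                     (mpauli (\<nu> j) (a j) (b j))) \<psi>)
                   (\<Phi> \<mu>X \<mu>Z))
         \<and> (\<forall>\<mu>X \<mu>Z \<mu>X' \<mu>Z'. (\<forall>j. \<mu>X j \<in> {1, -1} \<and> \<mu>Z j \<in> {1, -1}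
                                \<and> \<mu>X' j \<in> {1, -1} \<and> \<mu>Z' j \<in> {1, -1}) \<longrightarrow>
              anorm (\<Phi> \<mu>X \<mu>Z) = anorm (\<Phi> \<mu>X' \<mu>Z'))"
proof (intro exI[of _ "\<lambda>_ \<mu>Z. anc_final a b \<mu>Z \<mu>0 \<mu>1"] conjI allI impI)
  fix \<mu>X \<mu>Z :: "'q \<Rightarrow> complex"
  assume "\<forall>j. \<mu>X j \<in> {1, -1} \<and> \<mu>Z j \<in> {1, -1}"
  with out0 out1 show "Psi_f a b \<mu>X \<mu>Z \<mu>0 \<mu>1 \<psi> =
      tens (oprod (\<lambda>j. proj ((- \<i>) ^ char_num (a j) (b j) * \<nu> j * \<mu>X j * \<mu>Z j)
                             (mpauli (\<nu> j) (a j) (b j))) \<psi>)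
           ((\<lambda>_ \<mu>Z. anc_final a b \<mu>Z \<mu>0 \<mu>1) \<mu>X \<mu>Z)"
    by (simp add: psi_f_eq_tens_anc_final[OF herm reg])
next
  fix \<mu>X \<mu>Z \<mu>X' \<mu>Z' :: "'q \<Rightarrow> complex"
  assume "\<forall>j. \<mu>X j \<in> {1, -1} \<and> \<mu>Z j \<in> {1, -1} \<and> \<mu>X' j \<in> {1, -1} \<and> \<mu>Z' j \<in> {1, -1}"
  then show "anorm ((\<lambda>_ \<mu>Z. anc_final a b \<mu>Z \<mu>0 \<mu>1) \<mu>X \<mu>Z)
           = anorm ((\<lambda>_ \<mu>Z. anc_final a b \<mu>Z \<mu>0 \<mu>1) \<mu>X' \<mu>Z')"
    by (simp add: anorm_anc_final_sign_invariant)
qed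

end
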